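(* Let $\mathcal{H}$ be a finite-dimensional Hilbert space, $\ket{h}\in\mathcal{H}$ a unit vector, and $W_0,W_1,\ldots,W_l$ subspaces of $\mathcal{H}$. For $0\le j\le l$ let $\epsilon_j:=\|\Pi_{W_j}\ket h\|_2^2$. Let $0<\alpha<1/3$, let $\mathbf{W}_\alpha\le\tilde{\mathcal{H}}$ be the $\alpha$-tilted span of $W_1,\ldots,W_l$, and let $\mathbf{W}:=\mathbf{W}_\alpha+W_0\le\tilde{\mathcal H}$ (with $W_0$ embedded via the identity embedding $\mathcal H\hookrightarrow\tilde{\mathcal H}$). Let $\epsilon:=\frac{1-\alpha}{\alpha}\sum_{j=1}^l\epsilon_j$. Then $$\max\Big\{\epsilon_0,\,(1-\alpha)\max_{1\le j\le l}\epsilon_j\Big\}\ \le\ \|\Pi_{\mathbf W}\ket h\|_2^2\ \le\ \frac{3l}{\alpha}(\epsilon_0+\epsilon).$$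
   Context: Tilted span: Let $\mathcal{H}_1,\ldots,\mathcal{H}_l$ be Hilbert spaces each of dimension $\dim\mathcal{H}$, and $\tilde{\mathcal{H}}:=\mathcal{H}\oplus\mathcal{H}_1\oplus\cdots\oplus\mathcal{H}_l$ (orthogonal direct sum). Let $\mathcal{T}_j$ be a linear map taking $\mathcal{H}$ isometrically onto $\mathcal{H}_j$. For $0<\alpha<1$ define $\mathcal{T}_{j,\alpha}:=\sqrt{1-\alpha}\,\mathbb{1}_{\mathcal{H}}+\sqrt{\alpha}\,\mathcal{T}_j:\mathcal{H}\to\tilde{\mathcal{H}}$, with $\mathbb{1}_{\mathcal H}$ the identity embedding. The $\alpha$-tilted span of subspaces $W_1,\dots,W_l\le\mathcal H$ is $\mathbf{W}_\alpha:=\sum_{j=1}^l\mathcal{T}_{j,\alpha}(W_j)$. $\Pi_X$ denotes orthogonal projection onto $X$. *)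

theory Defs
  imports "HOL-Analysis.Analysis"
begin

text \<open>The finite-dimensional complex Hilbert space H is modelled as complex^'n
 (any finite index type 'n). Its real inner product is Re of the complex inner
 product, so orthogonality coincides with complex orthogonality.\<close>

definition csubspace :: "(complex^'n) set \<Rightarrow> bool" where
  "csubspace W \<longleftrightarrow> 0 \<in> W \<and> (\<forall>x\<in>W. \<forall>y\<in>W. x + y \<in> W) \<and> (\<forall>c. \<forall>x\<in>W. c *s x \<in> W)"

definition clinear_map :: "(complex^'n \<Rightarrow> complex^'n) \<Rightarrow> bool" where
  "clinear_map f \<longleftrightarrow> (\<forall>x y. f (x + y) = f x + f y) \<and> (\<forall>c x. f (c *s x) = c *s f x)"

definition proj :: "(complex^'n) set \<Rightarrow> complex^'n \<Rightarrow> complex^'n" where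
  "proj W h = (THE p. p \<in> W \<and> (\<forall>w\<in>W. inner (h - p) w = 0))"

text \<open>The direct sum H_tilde = H (+) H_1 (+) ... (+) H_l is modelled as functions
 x :: nat => complex^'n with x i = 0 for i > l; slot 0 is H, slot j is H_j.\<close>

definition tspace :: "nat \<Rightarrow> (nat \<Rightarrow> complex^'n) set" where
  "tspace l = {x. \<forall>i>l. x i = 0}"

definition tinner :: "nat \<Rightarrow> (nat \<Rightarrow> complex^'n) \<Rightarrow> (nat \<Rightarrow> complex^'n) \<Rightarrow> real" where
  "tinner l x y = (\<Sum>i\<le>l. inner (x i) (y i))"

definition tnorm :: "nat \<Rightarrow> (nat \<Rightarrow> complex^'n) \<Rightarrow> real" where
  "tnorm l x = sqrt (tinner l x x)"

definition tproj :: "nat \<Rightarrow> (nat \<Rightarrow> complex^'n) set \<Rightarrow> (nat \<Rightarrow> complex^'n) \<Rightarrow> (nat \<Rightarrow> complex^'n)" where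
  "tproj l W x = (THE p. p \<in> W \<and> (\<forall>w\<in>W. tinner l (\<lambda>i. x i - p i) w = 0))"

definition emb :: "complex^'n \<Rightarrow> (nat \<Rightarrow> complex^'n)" where
  "emb h = (\<lambda>i. if i = 0 then h else 0)"

text \<open>T_j = (slot-j embedding) o U_j, where U_j is a unitary on H, so T_j maps H
 isometrically onto H_j. T_{j,alpha} = sqrt(1-alpha) 1_H + sqrt alpha T_j.\<close>
definition Tj :: "(nat \<Rightarrow> complex^'n \<Rightarrow> complex^'n) \<Rightarrow> nat \<Rightarrow> complex^'n \<Rightarrow> (nat \<Rightarrow> complex^'n)" where
  "Tj U j h = (\<lambda>i. if i = j then U j h else 0)"

definition Tja :: "(nat \<Rightarrow> complex^'n \<Rightarrow> complex^'n) \<Rightarrow> nat \<Rightarrow> real \<Rightarrow> complex^'n \<Rightarrow> (nat \<Rightarrow> complex^'n)" where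
  "Tja U j \<alpha> h = (\<lambda>i. sqrt (1 - \<alpha>) *\<^sub>R emb h i + sqrt \<alpha> *\<^sub>R Tj U j h i)"

definition tilted_span :: "(nat \<Rightarrow> complex^'n \<Rightarrow> complex^'n) \<Rightarrow> nat \<Rightarrow> real \<Rightarrow> (nat \<Rightarrow> (complex^'n) set) \<Rightarrow> (nat \<Rightarrow> complex^'n) set" where
  "tilted_span U l \<alpha> W = {(\<lambda>i. \<Sum>j\<in>{1..l}. Tja U j \<alpha> (w j) i) | w. \<forall>j\<in>{1..l}. w j \<in> W j}"

definition tsum :: "(nat \<Rightarrow> complex^'n) set \<Rightarrow> (nat \<Rightarrow> complex^'n) set \<Rightarrow> (nat \<Rightarrow> complex^'n) set" where
  "tsum A B = {(\<lambda>i. a i + b i) | a b. a \<in> A \<and> b \<in> B}"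

end

theory Submission
  imports Defs "HOL-Library.Function_Algebras" "HOL-Analysis.L2_Norm"
begin

text \<open>Let \<open>P\<close> be the projection of \<open>h\<close> onto \<open>\<^bold>W\<close> and \<open>N = \<parallel>P\<parallel>\<^sup>2 = \<langle>h, P\<rangle>\<close>.
  For every \<open>y \<in> \<^bold>W\<close> Cauchy--Schwarz gives \<open>\<langle>h, y\<rangle>\<^sup>2 \<le> N \<parallel>y\<parallel>\<^sup>2\<close>; testing with
  \<open>y = \<Pi>\<^sub>W\<^sub>0 h\<close> and with \<open>y = T\<^sub>j\<^sub>,\<^sub>\<alpha> \<Pi>\<^sub>W\<^sub>j h\<close> (an isometric image whose \<open>\<H>\<close>-component
  is \<open>\<surd>(1-\<alpha>) \<Pi>\<^sub>W\<^sub>j h\<close>) gives the lower bounds.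

  For the upper bound write \<open>P = \<Sum>\<^sub>j T\<^sub>j\<^sub>,\<^sub>\<alpha> w\<^sub>j + w\<^sub>0\<close> with \<open>w\<^sub>j \<in> W\<^sub>j\<close>. Its \<open>\<H>\<close>-component is
  \<open>P\<^sub>0 = \<surd>(1-\<alpha>) \<Sum>\<^sub>j w\<^sub>j + w\<^sub>0\<close> and \<open>N = \<parallel>P\<^sub>0\<parallel>\<^sup>2 + \<alpha> \<Sum>\<^sub>j \<parallel>w\<^sub>j\<parallel>\<^sup>2\<close>, so \<open>\<parallel>w\<^sub>j\<parallel>\<close> and
  \<open>\<parallel>w\<^sub>0\<parallel> - \<surd>(1-\<alpha>) \<Sum>\<^sub>j \<parallel>w\<^sub>j\<parallel>\<close> are controlled by \<open>\<surd>N\<close>. On the other hand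
  \<open>N = \<langle>h, P\<^sub>0\<rangle> = \<surd>(1-\<alpha>) \<Sum>\<^sub>j \<langle>\<Pi>\<^sub>W\<^sub>j h, w\<^sub>j\<rangle> + \<langle>\<Pi>\<^sub>W\<^sub>0 h, w\<^sub>0\<rangle>\<close>, and Cauchy--Schwarz turns
  this into \<open>\<surd>\<alpha> \<surd>N \<le> \<surd>(1-\<alpha>) \<surd>(\<Sum>\<^sub>j \<epsilon>\<^sub>j) + \<surd>\<epsilon>\<^sub>0 (\<surd>\<alpha> + \<surd>((1-\<alpha>) l))\<close>, which squares
  to the claim.\<close>

instantiation "fun" :: (type, real_vector) real_vector
begin
definition scaleR_fun :: "real \<Rightarrow> ('a \<Rightarrow> 'b) \<Rightarrow> 'a \<Rightarrow> 'b" where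
  "scaleR_fun r f = (\<lambda>x. r *\<^sub>R f x)"
instance by standard (auto simp: scaleR_fun_def fun_eq_iff algebra_simps)
end

lemma scaleR_fun_apply [simp]: "(r *\<^sub>R f) x = r *\<^sub>R f x"
  by (simp add: scaleR_fun_def)

lemma sum_fun_apply: "(sum f A) x = (\<Sum>a\<in>A. f a x)"
  by (induct A rule: infinite_finite_induct) auto

lemma tinner_diff_left: "tinner l (x - y) z = tinner l x z - tinner l y z"
  by (simp add: tinner_def inner_diff_left sum_subtractf)

lemma tinner_scaleR_left: "tinner l (r *\<^sub>R x) z = r * tinner l x z"
  by (simp add: tinner_def sum_distrib_left)

lemma tinner_add_right: "tinner l z (x + y) = tinner l z x + tinner l z y"
  by (simp add: tinner_def inner_add_right sum.distrib)

lemma tinner_scaleR_right: "tinner l z (r *\<^sub>R x) = r * tinner l z x"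
  by (simp add: tinner_def sum_distrib_left)

lemma tinner_zero_right [simp]: "tinner l z 0 = 0"
  by (simp add: tinner_def)

lemma tinner_self: "tinner l x x = (\<Sum>i\<le>l. (norm (x i))\<^sup>2)"
  by (simp add: tinner_def power2_norm_eq_inner)

lemma tinner_self_nonneg: "0 \<le> tinner l x x"
  by (simp add: tinner_self sum_nonneg)

lemma tinner_self_eq_0_iff: "tinner l x x = 0 \<longleftrightarrow> (\<forall>i\<le>l. x i = 0)"
  unfolding tinner_self by (subst sum_nonneg_eq_0_iff) auto

lemma tinner_eq_0_if_self_eq_0: "tinner l u u = 0 \<Longrightarrow> tinner l y u = 0"
  unfolding tinner_self_eq_0_iff by (simp add: tinner_def)

lemma tinner_Cauchy_Schwarz: "(tinner l x y)\<^sup>2 \<le> tinner l x x * tinner l y y"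
proof -
  have "\<bar>tinner l x y\<bar> \<le> (\<Sum>i\<le>l. \<bar>norm (x i)\<bar> * \<bar>norm (y i)\<bar>)"
    unfolding tinner_def by (rule order_trans[OF sum_abs]) (simp add: sum_mono Cauchy_Schwarz_ineq2)
  also have "\<dots> \<le> L2_set (\<lambda>i. norm (x i)) {..l} * L2_set (\<lambda>i. norm (y i)) {..l}"
    by (rule L2_set_mult_ineq)
  finally have "\<bar>tinner l x y\<bar>\<^sup>2 \<le> (L2_set (\<lambda>i. norm (x i)) {..l} * L2_set (\<lambda>i. norm (y i)) {..l})\<^sup>2"
    by (rule power_mono) simp
  thus ?thesis
    by (simp add: power_mult_distrib L2_set_def tinner_self sum_nonneg)
qed

lemma tinner_span_eq_0:
  assumes "\<forall>s\<in>S. tinner l z s = 0" "y \<in> span S"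
  shows "tinner l z y = 0"
  using assms(2)
proof (induct rule: span_induct)
  case base
  show ?case by (simp add: subspace_def tinner_add_right tinner_scaleR_right)
next
  case (step x) thus ?case using assms(1) by simp
qed

text \<open>Gram--Schmidt: the residual \<open>u = v - q\<close> of the new vector is orthogonal to \<open>S\<close>, so
  correcting by a multiple of \<open>u\<close> restores orthogonality to \<open>v\<close>. If \<open>u\<close> is null the
  coefficient is \<open>0\<close> (division by zero) and \<open>u\<close> is orthogonal to everything anyway.\<close>
lemma tinner_orthogonal_approximation_exists:
  assumes "finite S"
  shows "\<exists>p\<in>span S. \<forall>s\<in>S. tinner l (x - p) s = 0"
  using assms
proof (induct S arbitrary: x rule: finite_induct)
  case empty thus ?case by (auto intro: span_zero)
next
  case (insert v S x)
  obtain p' where p': "p' \<in> span S" "\<forall>s\<in>S. tinner l (x - p') s = 0"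
    using insert(3) by blast
  obtain q where q: "q \<in> span S" "\<forall>s\<in>S. tinner l (v - q) s = 0"
    using insert(3) by blast
  define u where "u = v - q"
  define c where "c = tinner l (x - p') u / tinner l u u"
  define p where "p = p' + c *\<^sub>R u"
  have span_S: "span S \<subseteq> span (insert v S)" by (rule span_mono) auto
  have "u \<in> span (insert v S)"
    unfolding u_def using q(1) span_S by (auto intro: span_diff span_base)
  hence "p \<in> span (insert v S)"
    unfolding p_def using p'(1) span_S by (auto intro: span_add span_scale)
  have xp: "x - p = (x - p') - c *\<^sub>R u" by (simp add: p_def)
  have S: "\<forall>s\<in>S. tinner l (x - p) s = 0"
    using p'(2) q(2) by (simp add: xp u_def tinner_diff_left tinner_scaleR_left)
  have "tinner l (x - p) u = 0"
    by (cases "tinner l u u = 0")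
      (simp_all add: tinner_eq_0_if_self_eq_0 xp tinner_diff_left tinner_scaleR_left c_def)
  moreover have "tinner l (x - p) q = 0" using tinner_span_eq_0[OF S q(1)] .
  ultimately have "tinner l (x - p) v = 0"
    using tinner_add_right[of l "x - p" "v - q" q] by (simp add: u_def)
  with S \<open>p \<in> span (insert v S)\<close> show ?case by blast
qed

lemma subspace_tspace: "subspace (tspace l)"
  by (simp add: subspace_def tspace_def)

lemma tproj_span:
  assumes "finite S" "S \<subseteq> tspace l"
  shows "tproj l (span S) x \<in> span S"
    and "y \<in> span S \<Longrightarrow> tinner l x y = tinner l (tproj l (span S) x) y"
proof -
  obtain p where p: "p \<in> span S" "\<forall>s\<in>S. tinner l (x - p) s = 0"
    using tinner_orthogonal_approximation_exists[OF assms(1)] by blast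
  have orth: "\<forall>w\<in>span S. tinner l (\<lambda>i. x i - p i) w = 0"
    using tinner_span_eq_0[OF p(2)] by (simp add: fun_diff_def)
  have "q = p" if "q \<in> span S" "\<forall>w\<in>span S. tinner l (\<lambda>i. x i - q i) w = 0" for q
  proof -
    have "q - p \<in> span S" using that(1) p(1) by (rule span_diff)
    hence "tinner l (q - p) (q - p) = 0"
      using orth that(2) tinner_diff_left[of l "x - p" "x - q" "q - p"]
      by (simp add: fun_diff_def)
    moreover have "q \<in> tspace l" "p \<in> tspace l"
      using that(1) p(1) span_minimal[OF assms(2) subspace_tspace] by auto
    ultimately have "\<forall>i. q i = p i"
      unfolding tinner_self_eq_0_iff tspace_def by (auto simp: fun_diff_def) (metis not_le)
    thus "q = p" by blast
  qed
  hence "tproj l (span S) x = p"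
    unfolding tproj_def using p(1) orth by (intro the_equality) blast+
  thus "tproj l (span S) x \<in> span S"
    and "y \<in> span S \<Longrightarrow> tinner l x y = tinner l (tproj l (span S) x) y"
    using p(1) tinner_span_eq_0[OF p(2)] by (auto simp: tinner_diff_left)
qed

lemma proj_subspace:
  fixes V :: "(complex^'n) set"
  assumes "subspace V"
  shows "proj V h \<in> V" and "w \<in> V \<Longrightarrow> inner h w = inner (proj V h) w"
proof -
  obtain y z where "y \<in> span V" "\<And>w. w \<in> span V \<Longrightarrow> orthogonal z w" "h = y + z"
    using orthogonal_subspace_decomp_exists[of V h] by metis
  moreover have "span V = V" using assms by (simp add: span_eq_iff)
  ultimately have yz: "y \<in> V" "\<And>w. w \<in> V \<Longrightarrow> orthogonal z w" "h = y + z"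
    by auto
  have orth: "\<forall>w\<in>V. inner (h - y) w = 0"
    using yz(2,3) by (simp add: orthogonal_def)
  have "q = y" if "q \<in> V" "\<forall>w\<in>V. inner (h - q) w = 0" for q
  proof -
    have "q - y \<in> V" using that(1) yz(1) assms by (simp add: subspace_diff)
    moreover have "inner (q - y) (q - y) = inner (h - y) (q - y) - inner (h - q) (q - y)"
      by (simp add: inner_diff_left)
    ultimately have "inner (q - y) (q - y) = 0"
      using orth that(2) by simp
    thus "q = y" by simp
  qed
  hence "proj V h = y"
    unfolding proj_def using yz(1) orth by (intro the_equality) blast+
  thus "proj V h \<in> V" and "w \<in> V \<Longrightarrow> inner h w = inner (proj V h) w"
    using yz(1) orth by (simp_all add: inner_diff_left)
qed

lemma inner_proj_self:
  fixes V :: "(complex^'n) set"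
  assumes "subspace V"
  shows "inner h (proj V h) = (norm (proj V h))\<^sup>2"
  unfolding power2_norm_eq_inner using proj_subspace[OF assms] by blast

lemma emb_apply_0 [simp]: "emb a 0 = a"
  by (simp add: emb_def)

lemma tinner_emb_left: "tinner l (emb a) z = inner a (z 0)"
proof -
  have "tinner l (emb a) z = (\<Sum>i\<le>l. if i = 0 then inner a (z 0) else 0)"
    unfolding tinner_def emb_def by (rule sum.cong) auto
  thus ?thesis by simp
qed

lemma tinner_self_split: "tinner l x x = (norm (x 0))\<^sup>2 + (\<Sum>i\<in>{1..l}. (norm (x i))\<^sup>2)"
proof -
  have "{..l} = insert 0 {1..l}" by auto
  thus ?thesis by (simp add: tinner_self)
qed

lemma Tja_apply_0: "j \<noteq> 0 \<Longrightarrow> Tja U j \<alpha> x 0 = sqrt (1 - \<alpha>) *\<^sub>R x"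
  by (simp add: Tja_def emb_def Tj_def)

lemma Tja_apply: "i \<noteq> 0 \<Longrightarrow> Tja U j \<alpha> x i = (if i = j then sqrt \<alpha> *\<^sub>R U j x else 0)"
  by (simp add: Tja_def emb_def Tj_def)

lemma linear_emb: "linear emb"
  by (intro linearI) (auto simp: fun_eq_iff emb_def)

lemma linear_Tja: "linear (U j) \<Longrightarrow> linear (Tja U j \<alpha>)"
  by (intro linearI)
    (auto simp: fun_eq_iff Tja_def emb_def Tj_def linear_add linear_scale algebra_simps)

lemma tinner_Tja_self:
  assumes "j \<in> {1..l}" "norm (U j x) = norm x" "0 \<le> \<alpha>" "\<alpha> \<le> 1"
  shows "tinner l (Tja U j \<alpha> x) (Tja U j \<alpha> x) = (norm x)\<^sup>2"
proof -
  have "(\<Sum>i\<in>{1..l}. (norm (Tja U j \<alpha> x i))\<^sup>2) = (\<Sum>i\<in>{1..l}. if i = j then \<alpha> * (norm x)\<^sup>2 else 0)"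
    using assms by (intro sum.cong) (auto simp: Tja_apply power_mult_distrib)
  thus ?thesis
    using assms by (simp add: tinner_self_split Tja_apply_0 power_mult_distrib algebra_simps)
qed

definition tilted_sum ::
  "(nat \<Rightarrow> complex^'n \<Rightarrow> complex^'n) \<Rightarrow> nat \<Rightarrow> real \<Rightarrow> (nat \<Rightarrow> complex^'n) \<Rightarrow> (nat \<Rightarrow> complex^'n)"
  where "tilted_sum U l \<alpha> w = (\<Sum>j\<in>{1..l}. Tja U j \<alpha> (w j)) + emb (w 0)"

lemma tilted_sum_apply_0:
  "tilted_sum U l \<alpha> w 0 = sqrt (1 - \<alpha>) *\<^sub>R (\<Sum>j\<in>{1..l}. w j) + w 0"
  by (simp add: tilted_sum_def sum_fun_apply Tja_apply_0 emb_def scaleR_sum_right)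

lemma tilted_sum_apply:
  "i \<in> {1..l} \<Longrightarrow> tilted_sum U l \<alpha> w i = sqrt \<alpha> *\<^sub>R U i (w i)"
  by (simp add: tilted_sum_def sum_fun_apply Tja_apply emb_def)

lemma tinner_tilted_sum_self:
  assumes "\<forall>j\<in>{1..l}. \<forall>x. norm (U j x) = norm x" "0 \<le> \<alpha>"
  shows "tinner l (tilted_sum U l \<alpha> w) (tilted_sum U l \<alpha> w)
           = (norm (tilted_sum U l \<alpha> w 0))\<^sup>2 + \<alpha> * (\<Sum>j\<in>{1..l}. (norm (w j))\<^sup>2)"
  using assms by (simp add: tinner_self_split tilted_sum_apply power_mult_distrib sum_distrib_left)

lemma tsum_tilted_span_eq:
  "tsum (tilted_span U l \<alpha> W) (emb ` W 0) = tilted_sum U l \<alpha> ` {w. \<forall>j\<le>l. w j \<in> W j}"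
proof safe
  fix x assume "x \<in> tsum (tilted_span U l \<alpha> W) (emb ` W 0)"
  then obtain w w0 where w: "\<forall>j\<in>{1..l}. w j \<in> W j" "w0 \<in> W 0"
    and x: "x = (\<lambda>i. (\<Sum>j\<in>{1..l}. Tja U j \<alpha> (w j) i) + emb w0 i)"
    unfolding tsum_def tilted_span_def by blast
  have "x = tilted_sum U l \<alpha> (w(0 := w0))"
    by (simp add: x tilted_sum_def sum_fun_apply plus_fun_def)
  moreover have "\<forall>j\<le>l. (w(0 := w0)) j \<in> W j"
    using w by (auto simp: Suc_le_eq)
  ultimately show "x \<in> tilted_sum U l \<alpha> ` {w. \<forall>j\<le>l. w j \<in> W j}" by blast
next
  fix w assume "\<forall>j\<le>l. w j \<in> W j"
  hence "(\<lambda>i. \<Sum>j\<in>{1..l}. Tja U j \<alpha> (w j) i) \<in> tilted_span U l \<alpha> W" "emb (w 0) \<in> emb ` W 0"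
    unfolding tilted_span_def by auto
  moreover have "tilted_sum U l \<alpha> w = (\<lambda>i. (\<Sum>j\<in>{1..l}. Tja U j \<alpha> (w j) i) + emb (w 0) i)"
    by (simp add: tilted_sum_def sum_fun_apply plus_fun_def)
  ultimately show "tilted_sum U l \<alpha> w \<in> tsum (tilted_span U l \<alpha> W) (emb ` W 0)"
    unfolding tsum_def
    by (intro CollectI exI[of _ "\<lambda>i. \<Sum>j\<in>{1..l}. Tja U j \<alpha> (w j) i"] exI[of _ "emb (w 0)"]) simp
qed

lemma linear_tilted_sum:
  assumes "\<forall>j\<in>{1..l}. linear (U j)"
  shows "linear (tilted_sum U l \<alpha>)"
proof (rule linearI)
  fix v w and c :: real
  show "tilted_sum U l \<alpha> (v + w) = tilted_sum U l \<alpha> v + tilted_sum U l \<alpha> w"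
    using assms
    by (simp add: tilted_sum_def linear_add[OF linear_Tja] linear_add[OF linear_emb] sum.distrib)
  show "tilted_sum U l \<alpha> (c *\<^sub>R w) = c *\<^sub>R tilted_sum U l \<alpha> w"
    using assms
    by (simp add: tilted_sum_def linear_scale[OF linear_Tja] linear_scale[OF linear_emb]
        scaleR_sum_right scaleR_add_right)
qed

lemma Tja_eq_tilted_sum:
  assumes "\<forall>k\<in>{1..l}. linear (U k)" "j \<in> {1..l}"
  shows "Tja U j \<alpha> b = tilted_sum U l \<alpha> (0(j := b))"
proof -
  have "(\<Sum>k\<in>{1..l}. Tja U k \<alpha> ((0(j := b)) k)) = (\<Sum>k\<in>{1..l}. if k = j then Tja U j \<alpha> b else 0)"
    using assms(1) by (intro sum.cong) (auto simp: linear_0[OF linear_Tja])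
  thus ?thesis
    using assms(2) by (simp add: tilted_sum_def linear_0[OF linear_emb])
qed

lemma emb_eq_tilted_sum:
  assumes "\<forall>k\<in>{1..l}. linear (U k)"
  shows "emb b = tilted_sum U l \<alpha> (0(0 := b))"
  using assms by (simp add: tilted_sum_def linear_0[OF linear_Tja])

lemma Tja_in_tilted_sum_image:
  assumes "\<forall>k\<in>{1..l}. linear (U k)" "\<forall>k\<le>l. subspace (W k)" "j \<in> {1..l}" "b \<in> W j"
  shows "Tja U j \<alpha> b \<in> tilted_sum U l \<alpha> ` {w. \<forall>k\<le>l. w k \<in> W k}"
  unfolding Tja_eq_tilted_sum[OF assms(1,3)]
  using assms(2-4) by (intro imageI) (auto intro: subspace_0)

lemma emb_in_tilted_sum_image:
  assumes "\<forall>k\<in>{1..l}. linear (U k)" "\<forall>k\<le>l. subspace (W k)" "b \<in> W 0"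
  shows "emb b \<in> tilted_sum U l \<alpha> ` {w. \<forall>k\<le>l. w k \<in> W k}"
  unfolding emb_eq_tilted_sum[OF assms(1), where \<alpha> = \<alpha>]
  using assms(2,3) by (intro imageI) (auto intro: subspace_0)

lemma tilted_sum_in_tspace: "tilted_sum U l \<alpha> w \<in> tspace l"
  by (auto simp: tspace_def tilted_sum_def sum_fun_apply Tja_def Tj_def emb_def intro!: sum.neutral)

lemma subspace_tilted_sum_image:
  assumes "\<forall>j\<in>{1..l}. linear (U j)" "\<forall>j\<le>l. subspace (W j)"
  shows "subspace (tilted_sum U l \<alpha> ` {w. \<forall>j\<le>l. w j \<in> W j})"
proof (rule linear_subspace_image[OF linear_tilted_sum[OF assms(1)]])
  show "subspace {w. \<forall>j\<le>l. w j \<in> W j}"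
    using assms(2) by (auto simp: subspace_def intro: subspace_0 subspace_add subspace_scale)
qed

lemma tilted_sum_image_eq_span:
  assumes lin: "\<forall>j\<in>{1..l}. linear (U j)" and sub: "\<forall>j\<le>l. subspace (W j)"
  obtains S where "finite S" "S \<subseteq> tspace l"
    and "tilted_sum U l \<alpha> ` {w. \<forall>j\<le>l. w j \<in> W j} = span S"
proof -
  define Wt where "Wt = tilted_sum U l \<alpha> ` {w. \<forall>j\<le>l. w j \<in> W j}"
  have "\<forall>j. \<exists>B. B \<subseteq> W j \<and> independent B \<and> W j \<subseteq> span B"
    by (meson basis_exists)
  then obtain B where B: "\<And>j. B j \<subseteq> W j" "\<And>j. independent (B j)" "\<And>j. W j \<subseteq> span (B j)"
    by metis
  define S where "S = (\<Union>j\<in>{1..l}. Tja U j \<alpha> ` B j) \<union> emb ` B 0"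
  have "finite S"
    unfolding S_def using B(2) finiteI_independent by auto
  have "S \<subseteq> Wt"
    unfolding S_def Wt_def using B(1) Tja_in_tilted_sum_image[OF lin sub] emb_in_tilted_sum_image[OF lin sub]
    by blast
  hence "span S \<subseteq> Wt"
    unfolding Wt_def by (rule span_minimal) (rule subspace_tilted_sum_image[OF lin sub])
  moreover have "Wt \<subseteq> span S"
  proof
    fix x assume "x \<in> Wt"
    then obtain w where w: "\<forall>j\<le>l. w j \<in> W j" and x: "x = tilted_sum U l \<alpha> w"
      unfolding Wt_def by blast
    have "Tja U j \<alpha> (w j) \<in> span S" if j: "j \<in> {1..l}" for j
    proof -
      have "Tja U j \<alpha> (w j) \<in> Tja U j \<alpha> ` span (B j)" using w B(3) j by auto
      also have "\<dots> = span (Tja U j \<alpha> ` B j)" using lin j linear_Tja linear_span_image by metis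
      also have "\<dots> \<subseteq> span S" unfolding S_def by (rule span_mono) (use j in blast)
      finally show ?thesis .
    qed
    moreover have "emb (w 0) \<in> span S"
    proof -
      have "emb (w 0) \<in> emb ` span (B 0)" using w B(3) by auto
      also have "\<dots> = span (emb ` B 0)" using linear_emb linear_span_image by metis
      also have "\<dots> \<subseteq> span S" unfolding S_def by (rule span_mono) blast
      finally show ?thesis .
    qed
    ultimately show "x \<in> span S"
      unfolding x tilted_sum_def by (intro span_add span_sum) auto
  qed
  ultimately have "Wt = span S" by blast
  moreover have "S \<subseteq> tspace l"
    using \<open>S \<subseteq> Wt\<close> tilted_sum_in_tspace unfolding Wt_def by blast
  ultimately show ?thesis
    using that \<open>finite S\<close> unfolding Wt_def by blast
qed

lemma le_square_if_le_sqrt_mult: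
  fixes N Y :: real
  assumes "N \<le> sqrt N * Y"
  shows "N \<le> Y\<^sup>2"
proof (cases "N \<le> 0")
  case False
  hence "sqrt N * sqrt N \<le> sqrt N * Y" using assms(1) by simp
  hence "sqrt N \<le> Y"
    by (rule mult_left_le_imp_le) (use False in simp)
  hence "(sqrt N)\<^sup>2 \<le> Y\<^sup>2" by (rule power_mono) (use False in simp)
  thus ?thesis using False by simp
qed (use zero_le_power2[of Y] in linarith)

text \<open>In the application \<open>a j = \<parallel>w\<^sub>j\<parallel>\<close>, \<open>n0 = \<parallel>w\<^sub>0\<parallel>\<close>, \<open>e j = \<parallel>\<Pi>\<^sub>W\<^sub>j h\<parallel>\<close>, \<open>e0 = \<parallel>\<Pi>\<^sub>W\<^sub>0 h\<parallel>\<close>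
  and \<open>N = \<parallel>P\<parallel>\<^sup>2\<close>, where \<open>P = \<Sum>\<^sub>j T\<^sub>j\<^sub>,\<^sub>\<alpha> w\<^sub>j + w\<^sub>0\<close> is the projection of \<open>h\<close>.\<close>
lemma tilted_bound_root:
  fixes N \<alpha> n0 e0 :: real and a e :: "nat \<Rightarrow> real"
  assumes \<alpha>: "0 < \<alpha>" "\<alpha> \<le> 1" and l: "1 \<le> l" and e0: "0 \<le> e0"
    and a: "\<And>j. 0 \<le> a j" and e: "\<And>j. 0 \<le> e j"
    and N_le: "N \<le> sqrt (1 - \<alpha>) * (\<Sum>j\<in>{1..l}. e j * a j) + e0 * n0"
    and n0_le: "n0 \<le> sqrt N + sqrt (1 - \<alpha>) * (\<Sum>j\<in>{1..l}. a j)"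
    and a_le: "\<alpha> * (\<Sum>j\<in>{1..l}. (a j)\<^sup>2) \<le> N"
  shows "\<alpha> * N \<le> (sqrt (1 - \<alpha>) * sqrt (\<Sum>j\<in>{1..l}. (e j)\<^sup>2) + e0 * (sqrt \<alpha> + sqrt (1 - \<alpha>) * sqrt (real l)))\<^sup>2"
proof -
  define q c L where "q = sqrt \<alpha>" and "c = sqrt (1 - \<alpha>)" and "L = sqrt (real l)"
  define E r where "E = (\<Sum>j\<in>{1..l}. (e j)\<^sup>2)" and "r = sqrt (\<Sum>j\<in>{1..l}. (a j)\<^sup>2)"
  define X where "X = c * sqrt E + e0 * (q + c * L)"
  have q: "0 < q" "q\<^sup>2 = \<alpha>" and c: "0 \<le> c" and L: "0 \<le> L"
    using \<alpha> by (auto simp: q_def c_def L_def)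
  have E: "0 \<le> E"
    by (simp add: E_def sum_nonneg)
  have "0 \<le> \<alpha> * (\<Sum>j\<in>{1..l}. (a j)\<^sup>2)"
    using \<alpha> by (simp add: sum_nonneg)
  hence N: "0 \<le> N" using a_le by linarith
  have ea: "(\<Sum>j\<in>{1..l}. e j * a j) \<le> sqrt E * r" and a1: "(\<Sum>j\<in>{1..l}. a j) \<le> L * r"
    using L2_set_mult_ineq[of e a "{1..l}"] L2_set_mult_ineq[of "\<lambda>_. 1" a "{1..l}"] a e
    by (simp_all add: L2_set_def E_def r_def L_def)
  have "(q * r)\<^sup>2 \<le> (sqrt N)\<^sup>2"
    using a_le N q by (simp add: power_mult_distrib r_def sum_nonneg)
  hence qr: "q * r \<le> sqrt N"
    by (rule power2_le_imp_le) (simp add: N)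
  have "e0 * n0 \<le> e0 * sqrt N + e0 * c * (\<Sum>j\<in>{1..l}. a j)"
    using mult_left_mono[OF n0_le e0] by (simp add: c_def algebra_simps)
  moreover have "e0 * c * (\<Sum>j\<in>{1..l}. a j) \<le> e0 * c * (L * r)"
    using a1 e0 c by (simp add: mult_left_mono)
  moreover have "c * (\<Sum>j\<in>{1..l}. e j * a j) \<le> c * (sqrt E * r)"
    using ea c by (simp add: mult_left_mono)
  ultimately have "N \<le> (c * sqrt E + e0 * c * L) * r + e0 * sqrt N"
    using N_le by (simp add: c_def algebra_simps)
  also have "\<dots> \<le> (c * sqrt E + e0 * c * L) * (sqrt N / q) + e0 * sqrt N"
    using qr q c L E e0 by (intro add_right_mono mult_left_mono) (auto simp: field_simps)
  also have "\<dots> = sqrt N * (X / q)"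
    using q by (simp add: X_def field_simps)
  finally have "N \<le> (X / q)\<^sup>2"
    by (rule le_square_if_le_sqrt_mult)
  also have "(X / q)\<^sup>2 = X\<^sup>2 / \<alpha>"
    using q by (simp add: power_divide)
  finally show ?thesis
    using \<alpha>(1) by (simp add: X_def q_def c_def L_def E_def field_simps)
qed

lemma tilted_bound_arith:
  fixes N \<alpha> n0 e0 :: real and a e :: "nat \<Rightarrow> real"
  assumes \<alpha>: "0 < \<alpha>" "\<alpha> \<le> 1" and l: "1 \<le> l" and e0: "0 \<le> e0"
    and a: "\<And>j. 0 \<le> a j" and e: "\<And>j. 0 \<le> e j"
    and N_le: "N \<le> sqrt (1 - \<alpha>) * (\<Sum>j\<in>{1..l}. e j * a j) + e0 * n0"
    and n0_le: "n0 \<le> sqrt N + sqrt (1 - \<alpha>) * (\<Sum>j\<in>{1..l}. a j)"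
    and a_le: "\<alpha> * (\<Sum>j\<in>{1..l}. (a j)\<^sup>2) \<le> N"
  shows "N \<le> 3 * real l / \<alpha> * (e0\<^sup>2 + (1 - \<alpha>) / \<alpha> * (\<Sum>j\<in>{1..l}. (e j)\<^sup>2))"
proof -
  define q c L where "q = sqrt \<alpha>" and "c = sqrt (1 - \<alpha>)" and "L = sqrt (real l)"
  define E where "E = (\<Sum>j\<in>{1..l}. (e j)\<^sup>2)"
  have q: "q\<^sup>2 = \<alpha>" and c: "0 \<le> c" "c\<^sup>2 = 1 - \<alpha>" and L: "L\<^sup>2 = real l" and E: "0 \<le> E"
    using \<alpha> by (auto simp: q_def c_def L_def E_def sum_nonneg)
  have "\<alpha> * N \<le> (c * sqrt E + e0 * (q + c * L))\<^sup>2"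
    unfolding q_def c_def L_def E_def by (rule tilted_bound_root[OF assms])
  also have "\<dots> \<le> (1 + (q + c * L)\<^sup>2) * ((c * sqrt E)\<^sup>2 + e0\<^sup>2)"
    using zero_le_power2[of "(q + c * L) * (c * sqrt E) - e0"]
    by (simp add: power2_eq_square algebra_simps)
  also have "\<dots> \<le> 3 * real l * ((1 - \<alpha>) * E + e0\<^sup>2)"
  proof -
    have "(q + c * L)\<^sup>2 \<le> 2 * (q\<^sup>2 + c\<^sup>2 * L\<^sup>2)"
      using zero_le_power2[of "q - c * L"] by (simp add: power2_eq_square algebra_simps)
    also have "\<dots> \<le> 2 * real l"
      using mult_left_mono[of 1 "real l" \<alpha>] \<alpha> l by (simp add: q c L algebra_simps)
    finally show ?thesis
      using \<alpha> l E e0 c by (intro mult_mono) (auto simp: power_mult_distrib)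
  qed
  also have "\<dots> \<le> 3 * real l * (e0\<^sup>2 + (1 - \<alpha>) / \<alpha> * E)"
  proof -
    have "(1 - \<alpha>) * E \<le> (1 - \<alpha>) / \<alpha> * E"
      using mult_left_le[of \<alpha> "1 - \<alpha>"] \<alpha> E by (intro mult_right_mono) (auto simp: field_simps)
    hence "(1 - \<alpha>) * E + e0\<^sup>2 \<le> e0\<^sup>2 + (1 - \<alpha>) / \<alpha> * E" by linarith
    thus ?thesis by (rule mult_left_mono) simp
  qed
  finally show ?thesis
    using \<alpha>(1) by (simp add: E_def field_simps)
qed

lemma tproj_tsum_tilted_span:
  fixes U l \<alpha> W x
  defines "P \<equiv> tproj l (tsum (tilted_span U l \<alpha> W) (emb ` W 0)) x"
  assumes "\<forall>j\<in>{1..l}. linear (U j)" "\<forall>j\<le>l. subspace (W j)"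
  shows "P \<in> tilted_sum U l \<alpha> ` {w. \<forall>j\<le>l. w j \<in> W j}"
    and "y \<in> tilted_sum U l \<alpha> ` {w. \<forall>j\<le>l. w j \<in> W j} \<Longrightarrow> tinner l x y = tinner l P y"
proof -
  obtain S where S: "finite S" "S \<subseteq> tspace l" "tilted_sum U l \<alpha> ` {w. \<forall>j\<le>l. w j \<in> W j} = span S"
    by (rule tilted_sum_image_eq_span[OF assms(2,3)])
  show "P \<in> tilted_sum U l \<alpha> ` {w. \<forall>j\<le>l. w j \<in> W j}"
    and "y \<in> tilted_sum U l \<alpha> ` {w. \<forall>j\<le>l. w j \<in> W j} \<Longrightarrow> tinner l x y = tinner l P y"
    unfolding P_def tsum_tilted_span_eq S(3) using tproj_span[OF S(1,2)] by blast+
qed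

lemma tproj_lower_bound:
  assumes "P \<in> V" "\<And>y. y \<in> V \<Longrightarrow> tinner l x y = tinner l P y" "y \<in> V"
    and "tinner l x y = a * t" "tinner l y y = t"
  shows "a\<^sup>2 * t \<le> tinner l P P"
proof -
  have "(a * t)\<^sup>2 \<le> tinner l P P * t"
    using tinner_Cauchy_Schwarz[of l P y] assms(2-5) by simp
  moreover have "0 \<le> t" "0 \<le> tinner l P P"
    using assms(5) tinner_self_nonneg by metis+
  ultimately show ?thesis
    by (cases "t = 0") (simp_all add: power_mult_distrib power2_eq_square)
qed

lemma tilted_projection_lower_bounds:
  fixes h :: "complex^'n" and U l \<alpha> W
  defines "V \<equiv> tilted_sum U l \<alpha> ` {w. \<forall>j\<le>l. w j \<in> W j}"
  assumes lin: "\<forall>j\<in>{1..l}. linear (U j)" and iso: "\<forall>j\<in>{1..l}. \<forall>x. norm (U j x) = norm x"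
    and \<alpha>: "0 \<le> \<alpha>" "\<alpha> \<le> 1" and sub: "\<forall>j\<le>l. subspace (W j)"
    and P: "P \<in> V" "\<And>y. y \<in> V \<Longrightarrow> tinner l (emb h) y = tinner l P y"
  shows "(norm (proj (W 0) h))\<^sup>2 \<le> tinner l P P"
    and "j \<in> {1..l} \<Longrightarrow> (1 - \<alpha>) * (norm (proj (W j) h))\<^sup>2 \<le> tinner l P P"
proof -
  note P = P[unfolded V_def]
  have p: "proj (W j) h \<in> W j" "inner h (proj (W j) h) = (norm (proj (W j) h))\<^sup>2" if "j \<le> l" for j
    using sub that by (simp_all add: proj_subspace inner_proj_self)
  show "(norm (proj (W 0) h))\<^sup>2 \<le> tinner l P P"
    using tproj_lower_bound[OF P emb_in_tilted_sum_image[OF lin sub p(1)], of 1] p(2)[of 0]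
    by (simp add: tinner_emb_left power2_norm_eq_inner)
  assume j: "j \<in> {1..l}"
  show "(1 - \<alpha>) * (norm (proj (W j) h))\<^sup>2 \<le> tinner l P P"
    using tproj_lower_bound[OF P Tja_in_tilted_sum_image[OF lin sub j p(1)],
        of "sqrt (1 - \<alpha>)" "(norm (proj (W j) h))\<^sup>2"] p(2)[of j] j iso \<alpha>
    by (simp add: tinner_emb_left Tja_apply_0 tinner_Tja_self)
qed

lemma tilted_projection_upper_bound:
  fixes h :: "complex^'n" and U l \<alpha> w
  defines "P \<equiv> tilted_sum U l \<alpha> w"
  assumes iso: "\<forall>j\<in>{1..l}. \<forall>x. norm (U j x) = norm x" and \<alpha>: "0 < \<alpha>" "\<alpha> \<le> 1" and "1 \<le> l"
    and sub: "\<forall>j\<le>l. subspace (W j)" and w: "\<forall>j\<le>l. w j \<in> W j"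
    and N: "tinner l (emb h) P = tinner l P P"
  shows "tinner l P P
           \<le> 3 * real l / \<alpha> * ((norm (proj (W 0) h))\<^sup>2 + (1 - \<alpha>) / \<alpha> * (\<Sum>j\<in>{1..l}. (norm (proj (W j) h))\<^sup>2))"
proof (rule tilted_bound_arith[OF \<alpha> \<open>1 \<le> l\<close>])
  let ?p = "\<lambda>j. proj (W j) h" and ?c = "sqrt (1 - \<alpha>)"
  have split: "tinner l P P = (norm (P 0))\<^sup>2 + \<alpha> * (\<Sum>j\<in>{1..l}. (norm (w j))\<^sup>2)"
    unfolding P_def using iso \<alpha> by (intro tinner_tilted_sum_self) auto
  thus "\<alpha> * (\<Sum>j\<in>{1..l}. (norm (w j))\<^sup>2) \<le> tinner l P P" by simp
  have h_proj: "inner h (w j) = inner (?p j) (w j)" if "j \<le> l" for j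
    using sub w that by (simp add: proj_subspace)
  have "tinner l P P = inner h (P 0)"
    using N by (simp add: tinner_emb_left)
  also have "\<dots> = ?c * (\<Sum>j\<in>{1..l}. inner (?p j) (w j)) + inner (?p 0) (w 0)"
    using h_proj by (simp add: P_def tilted_sum_apply_0 inner_add_right inner_sum_right)
  also have "\<dots> \<le> ?c * (\<Sum>j\<in>{1..l}. norm (?p j) * norm (w j)) + norm (?p 0) * norm (w 0)"
    using \<alpha> by (intro add_mono mult_left_mono sum_mono norm_cauchy_schwarz) simp_all
  finally show "tinner l P P \<le> ?c * (\<Sum>j\<in>{1..l}. norm (?p j) * norm (w j)) + norm (?p 0) * norm (w 0)" .
  have "norm (P 0) \<le> sqrt (tinner l P P)"
    using split \<alpha> by (intro real_le_rsqrt) (simp add: sum_nonneg)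
  have "w 0 = P 0 - ?c *\<^sub>R (\<Sum>j\<in>{1..l}. w j)"
    by (simp add: P_def tilted_sum_apply_0)
  hence "norm (w 0) \<le> norm (P 0) + norm (?c *\<^sub>R (\<Sum>j\<in>{1..l}. w j))"
    by (metis norm_triangle_ineq4)
  also have "\<dots> \<le> sqrt (tinner l P P) + ?c * (\<Sum>j\<in>{1..l}. norm (w j))"
    using \<open>norm (P 0) \<le> sqrt (tinner l P P)\<close> \<alpha> norm_sum[of w "{1..l}"]
    by (intro add_mono) (auto intro: mult_left_mono)
  finally show "norm (w 0) \<le> sqrt (tinner l P P) + ?c * (\<Sum>j\<in>{1..l}. norm (w j))" .
qed simp_all

lemma scaleR_eq_complex_scale: "r *\<^sub>R (x :: complex^'n) = complex_of_real r *s x"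
  unfolding vec_eq_iff vector_scaleR_component vector_smult_component
  by (simp add: scaleR_conv_of_real)

lemma subspace_if_csubspace: "csubspace (W :: (complex^'n) set) \<Longrightarrow> subspace W"
  unfolding csubspace_def subspace_def by (simp add: scaleR_eq_complex_scale)

lemma linear_if_clinear_map: "clinear_map (f :: complex^'n \<Rightarrow> complex^'n) \<Longrightarrow> linear f"
  unfolding clinear_map_def by (intro linearI) (simp_all add: scaleR_eq_complex_scale)

theorem corollary1:
  fixes h :: "complex^'n" and W :: "nat \<Rightarrow> (complex^'n) set"
    and U :: "nat \<Rightarrow> complex^'n \<Rightarrow> complex^'n"
    and l :: nat and \<alpha> :: real and \<epsilon> :: "nat \<Rightarrow> real"
  assumes "norm h = 1"
    and "l \<ge> 1"
    and "\<forall>j\<le>l. csubspace (W j)"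
    and "\<forall>j\<in>{1..l}. clinear_map (U j) \<and> surj (U j) \<and> (\<forall>x. norm (U j x) = norm x)"
    and "\<forall>j\<le>l. \<epsilon> j = (norm (proj (W j) h))\<^sup>2"
    and "0 < \<alpha>" and "\<alpha> < 1/3"
  shows "max (\<epsilon> 0) ((1 - \<alpha>) * Max (\<epsilon> ` {1..l}))
           \<le> (tnorm l (tproj l (tsum (tilted_span U l \<alpha> W) (emb ` W 0)) (emb h)))\<^sup>2
       \<and> (tnorm l (tproj l (tsum (tilted_span U l \<alpha> W) (emb ` W 0)) (emb h)))\<^sup>2
           \<le> 3 * real l / \<alpha> * (\<epsilon> 0 + (1 - \<alpha>) / \<alpha> * (\<Sum>j\<in>{1..l}. \<epsilon> j))"
proof -
  have sub: "\<forall>j\<le>l. subspace (W j)"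
    using assms(3) subspace_if_csubspace by blast
  have lin: "\<forall>j\<in>{1..l}. linear (U j)" and iso: "\<forall>j\<in>{1..l}. \<forall>x. norm (U j x) = norm x"
    using assms(4) linear_if_clinear_map by blast+
  have \<alpha>: "0 < \<alpha>" "\<alpha> \<le> 1"
    using assms(6,7) by auto
  define P where "P = tproj l (tsum (tilted_span U l \<alpha> W) (emb ` W 0)) (emb h)"
  have P: "P \<in> tilted_sum U l \<alpha> ` {w. \<forall>j\<le>l. w j \<in> W j}"
    "\<And>y. y \<in> tilted_sum U l \<alpha> ` {w. \<forall>j\<le>l. w j \<in> W j} \<Longrightarrow> tinner l (emb h) y = tinner l P y"
    unfolding P_def using tproj_tsum_tilted_span[OF lin sub] by blast+
  have "Max (\<epsilon> ` {1..l}) \<in> \<epsilon> ` {1..l}"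
    using assms(2) by (intro Max_in) auto
  then obtain j where j: "j \<in> {1..l}" "Max (\<epsilon> ` {1..l}) = \<epsilon> j"
    by blast
  have "\<epsilon> 0 \<le> tinner l P P" "(1 - \<alpha>) * \<epsilon> j \<le> tinner l P P"
    using tilted_projection_lower_bounds[OF lin iso _ \<alpha>(2) sub P] \<alpha> j(1) assms(5)
    by auto
  hence "max (\<epsilon> 0) ((1 - \<alpha>) * Max (\<epsilon> ` {1..l})) \<le> tinner l P P"
    using j(2) by simp
  moreover obtain w where w: "\<forall>j\<le>l. w j \<in> W j" "P = tilted_sum U l \<alpha> w"
    using P(1) by blast
  have "tinner l P P \<le> 3 * real l / \<alpha> * (\<epsilon> 0 + (1 - \<alpha>) / \<alpha> * (\<Sum>j\<in>{1..l}. \<epsilon> j))"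
    using tilted_projection_upper_bound[OF iso \<alpha> assms(2) sub w(1), of h] P assms(5)
    unfolding w(2)[symmetric] by simp
  ultimately show ?thesis
    by (simp add: tnorm_def P_def tinner_self_nonneg)
qed

end
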